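(* For every monoid $M$ there is a simple or $0$-simple monoid $N$ such that $\mathfrak{L}(\mathrm{Val},\mathrm{CF},M)=\mathfrak{L}(\mathrm{Val},\mathrm{CF},N)$.
   Context: An ideal of a semigroup $S$ is $I\subseteq S$ with $S^1IS^1\subseteq I$. $S$ is simple if it has no proper ideal; $S$ with a zero is $0$-simple if its only ideals are $\{0\}$ and $S$ and $SS\ne\{0\}$. A context-free valence grammar over a monoid $N$ is $(V,T,P,S,N)$ with nonterminals $V$, terminals $T$, start symbol $S$ and a finite set $P$ of rules $(A\to\alpha,n)$ with $A\in V$, $\alpha\in(V\cup T)^*$, $n\in N$. One step: $(w_1Aw_2,m)\Rightarrow(w_1\alpha w_2,mn)$ for a rule $(A\to\alpha,n)$. The generated language is $\{w\in T^*:(S,1)\Rightarrow^*(w,1)\}$. $\mathfrak{L}(\mathrm{Val},\mathrm{CF},N)$ is the family of languages generated by such grammars over $N$. *)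

theory Defs
  imports "HOL-Algebra.Group"
begin

definition sgrp_ideal :: "('a, 'b) monoid_scheme \<Rightarrow> 'a set \<Rightarrow> bool" where
  "sgrp_ideal S I \<longleftrightarrow> I \<noteq> {} \<and> I \<subseteq> carrier S \<and>
     (\<forall>x\<in>carrier S. \<forall>a\<in>I. \<forall>y\<in>carrier S. x \<otimes>\<^bsub>S\<^esub> a \<otimes>\<^bsub>S\<^esub> y \<in> I)"

definition is_zero :: "('a, 'b) monoid_scheme \<Rightarrow> 'a \<Rightarrow> bool" where
  "is_zero S z \<longleftrightarrow> z \<in> carrier S \<and>
     (\<forall>x\<in>carrier S. z \<otimes>\<^bsub>S\<^esub> x = z \<and> x \<otimes>\<^bsub>S\<^esub> z = z)"

definition simple_sgrp :: "('a, 'b) monoid_scheme \<Rightarrow> bool" where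
  "simple_sgrp S \<longleftrightarrow> (\<forall>I. sgrp_ideal S I \<longrightarrow> I = carrier S)"

definition zero_simple_sgrp :: "('a, 'b) monoid_scheme \<Rightarrow> bool" where
  "zero_simple_sgrp S \<longleftrightarrow> (\<exists>z. is_zero S z \<and>
     (\<forall>I. sgrp_ideal S I \<longrightarrow> I = {z} \<or> I = carrier S) \<and>
     (\<exists>x\<in>carrier S. \<exists>y\<in>carrier S. x \<otimes>\<^bsub>S\<^esub> y \<noteq> z))"

text \<open>Sentential forms are lists over nonterminals (Inl) and terminals (Inr).
A rule (A, alpha, n) stands for (A \<rightarrow> alpha, n).\<close>

record ('n, 't, 'm) val_grammar =
  nonterms :: "'n set"
  terms :: "'t set"
  rules :: "('n \<times> ('n + 't) list \<times> 'm) set"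
  start :: 'n

definition valid_val_grammar ::
    "('m, 'b) monoid_scheme \<Rightarrow> ('n, 't, 'm) val_grammar \<Rightarrow> bool" where
  "valid_val_grammar M G \<longleftrightarrow>
     finite (nonterms G) \<and> finite (terms G) \<and> finite (rules G) \<and>
     start G \<in> nonterms G \<and>
     (\<forall>(A, \<alpha>, n) \<in> rules G. A \<in> nonterms G \<and> n \<in> carrier M \<and>
        set \<alpha> \<subseteq> Inl ` nonterms G \<union> Inr ` terms G)"

definition val_step ::
    "('m, 'b) monoid_scheme \<Rightarrow> ('n, 't, 'm) val_grammar \<Rightarrow>
     ((('n + 't) list \<times> 'm) \<times> (('n + 't) list \<times> 'm)) set" where
  "val_step M G = {((w1 @ [Inl A] @ w2, m), (w1 @ \<alpha> @ w2, m \<otimes>\<^bsub>M\<^esub> n)) | w1 w2 A \<alpha> m n.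
       (A, \<alpha>, n) \<in> rules G}"

definition val_lang ::
    "('m, 'b) monoid_scheme \<Rightarrow> ('n, 't, 'm) val_grammar \<Rightarrow> 't list set" where
  "val_lang M G = {w. set w \<subseteq> terms G \<and>
     (([Inl (start G)], \<one>\<^bsub>M\<^esub>), (map Inr w, \<one>\<^bsub>M\<^esub>)) \<in> (val_step M G)\<^sup>*}"

text \<open>The language family L(Val,CF,M); nonterminals and terminals are drawn from
the countable universe nat (alphabets are finite subsets of it).\<close>

definition val_cf_family :: "('m, 'b) monoid_scheme \<Rightarrow> nat list set set" where
  "val_cf_family M = {L. \<exists>G :: (nat, nat, 'm) val_grammar.
       valid_val_grammar M G \<and> L = val_lang M G}"

end

theory Submission
  imports Defs
begin

text \<open>Let \<open>J\<close> be Green's \<open>J\<close>-class of the identity: the elements \<open>x\<close> with \<open>u x v = 1\<close>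
for some \<open>u, v\<close>. It is closed under taking factors, so its principal factor
\<open>N = J \<union> {0}\<close>, in which every product leaving \<open>J\<close> collapses to \<open>0\<close>, is a monoid, and it
is \<open>0\<close>-simple because \<open>1\<close> lies in the ideal generated by any element of \<open>J\<close>. In a valence
derivation ending with value \<open>1\<close>, every intermediate value is a left factor of \<open>1\<close> and every
rule label \<open>n\<close> applied at value \<open>m\<close> has \<open>m n\<close> in \<open>J\<close>; hence all values and labels involved
lie in \<open>J\<close>. So successful derivations over \<open>M\<close> and over \<open>N\<close> correspond to each other once
rules labelled outside \<open>J\<close> are discarded.\<close>

definition J_class_one :: "('a, 'b) monoid_scheme \<Rightarrow> 'a set" where
  "J_class_one M = {x \<in> carrier M. \<exists>u\<in>carrier M. \<exists>v\<in>carrier M. u \<otimes>\<^bsub>M\<^esub> x \<otimes>\<^bsub>M\<^esub> v = \<one>\<^bsub>M\<^esub>}"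

fun principal_factor_mult :: "('a, 'b) monoid_scheme \<Rightarrow> 'a option \<Rightarrow> 'a option \<Rightarrow> 'a option" where
  "principal_factor_mult M (Some a) (Some b) =
     (if a \<otimes>\<^bsub>M\<^esub> b \<in> J_class_one M then Some (a \<otimes>\<^bsub>M\<^esub> b) else None)"
| "principal_factor_mult M _ _ = None"

definition principal_factor :: "('a, 'b) monoid_scheme \<Rightarrow> 'a option monoid" where
  "principal_factor M =
     \<lparr>carrier = insert None (Some ` J_class_one M), mult = principal_factor_mult M,
      one = Some \<one>\<^bsub>M\<^esub>\<rparr>"

lemma principal_factor_simps [simp]:
  "carrier (principal_factor M) = insert None (Some ` J_class_one M)"
  "mult (principal_factor M) = principal_factor_mult M"
  "one (principal_factor M) = Some \<one>\<^bsub>M\<^esub>"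
  by (simp_all add: principal_factor_def)

lemma principal_factor_mult_eq_Some_iff:
  "principal_factor_mult M x y = Some p \<longleftrightarrow>
     (\<exists>a b. x = Some a \<and> y = Some b \<and> p = a \<otimes>\<^bsub>M\<^esub> b \<and> a \<otimes>\<^bsub>M\<^esub> b \<in> J_class_one M)"
  by (cases "(M, x, y)" rule: principal_factor_mult.cases) auto

context monoid
begin

lemma J_class_one_carrier: "x \<in> J_class_one G \<Longrightarrow> x \<in> carrier G"
  unfolding J_class_one_def by auto

lemma one_in_J_class_one: "\<one> \<in> J_class_one G"
  unfolding J_class_one_def by (auto intro!: bexI[of _ \<one>])

lemma J_class_one_mult_leftD:
  assumes "a \<otimes> b \<in> J_class_one G" "a \<in> carrier G" "b \<in> carrier G"
  shows "a \<in> J_class_one G"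
proof -
  obtain u v where "u \<in> carrier G" "v \<in> carrier G" "u \<otimes> (a \<otimes> b) \<otimes> v = \<one>"
    using assms(1) unfolding J_class_one_def by auto
  moreover from this have "u \<otimes> a \<otimes> (b \<otimes> v) = \<one>"
    using assms by (simp add: m_assoc)
  ultimately show ?thesis
    using assms unfolding J_class_one_def by blast
qed

lemma J_class_one_mult_rightD:
  assumes "a \<otimes> b \<in> J_class_one G" "a \<in> carrier G" "b \<in> carrier G"
  shows "b \<in> J_class_one G"
proof -
  obtain u v where "u \<in> carrier G" "v \<in> carrier G" "u \<otimes> (a \<otimes> b) \<otimes> v = \<one>"
    using assms(1) unfolding J_class_one_def by auto
  moreover from this have "u \<otimes> a \<otimes> b \<otimes> v = \<one>"
    using assms by (simp add: m_assoc)
  ultimately show ?thesis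
    using assms unfolding J_class_one_def by blast
qed

lemma monoid_principal_factor: "monoid (principal_factor G)"
proof
  fix x y z
  assume xyz: "x \<in> carrier (principal_factor G)" "y \<in> carrier (principal_factor G)"
    "z \<in> carrier (principal_factor G)"
  show "x \<otimes>\<^bsub>principal_factor G\<^esub> y \<in> carrier (principal_factor G)"
    by (cases "(G, x, y)" rule: principal_factor_mult.cases) auto
  show "x \<otimes>\<^bsub>principal_factor G\<^esub> y \<otimes>\<^bsub>principal_factor G\<^esub> z =
        x \<otimes>\<^bsub>principal_factor G\<^esub> (y \<otimes>\<^bsub>principal_factor G\<^esub> z)"
  proof (cases "x = None \<or> y = None \<or> z = None")
    case True
    then show ?thesis by auto
  next
    case False
    then obtain a b c where abc: "x = Some a" "y = Some b" "z = Some c" by auto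
    with xyz have "a \<in> carrier G" "b \<in> carrier G" "c \<in> carrier G"
      by (auto simp: J_class_one_carrier)
    then show ?thesis
      using abc J_class_one_mult_leftD[of "a \<otimes> b" c] J_class_one_mult_rightD[of a "b \<otimes> c"]
      by (auto simp: m_assoc)
  qed
next
  show "\<one>\<^bsub>principal_factor G\<^esub> \<in> carrier (principal_factor G)"
    using one_in_J_class_one by simp
next
  fix x
  assume "x \<in> carrier (principal_factor G)"
  then show "\<one>\<^bsub>principal_factor G\<^esub> \<otimes>\<^bsub>principal_factor G\<^esub> x = x"
    and "x \<otimes>\<^bsub>principal_factor G\<^esub> \<one>\<^bsub>principal_factor G\<^esub> = x"
    by (auto simp: J_class_one_carrier)
qed

lemma zero_simple_principal_factor: "zero_simple_sgrp (principal_factor G)"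
  unfolding zero_simple_sgrp_def
proof (intro exI[of _ None] conjI allI impI)
  show "is_zero (principal_factor G) None"
    by (auto simp: is_zero_def)
  show "\<exists>x\<in>carrier (principal_factor G). \<exists>y\<in>carrier (principal_factor G).
          x \<otimes>\<^bsub>principal_factor G\<^esub> y \<noteq> None"
    using one_in_J_class_one by (intro bexI[of _ "Some \<one>"]) auto
next
  fix I
  assume "sgrp_ideal (principal_factor G) I"
  then have I: "I \<noteq> {}" "I \<subseteq> carrier (principal_factor G)"
    and closed: "\<And>x a y. x \<in> carrier (principal_factor G) \<Longrightarrow> a \<in> I \<Longrightarrow>
        y \<in> carrier (principal_factor G) \<Longrightarrow>
        x \<otimes>\<^bsub>principal_factor G\<^esub> a \<otimes>\<^bsub>principal_factor G\<^esub> y \<in> I"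
    unfolding sgrp_ideal_def by auto
  show "I = {None} \<or> I = carrier (principal_factor G)"
  proof (cases "I \<subseteq> {None}")
    case True
    with I show ?thesis by blast
  next
    case False
    then obtain a where a: "Some a \<in> I"
      by (metis not_None_eq singletonI subsetI)
    with I have "a \<in> J_class_one G" by auto
    then obtain u v where uv: "u \<in> carrier G" "v \<in> carrier G" "u \<otimes> a \<otimes> v = \<one>"
      and a_carrier: "a \<in> carrier G"
      unfolding J_class_one_def by auto
    have ua: "u \<otimes> a \<in> J_class_one G"
      using J_class_one_mult_leftD[of "u \<otimes> a" v] uv a_carrier one_in_J_class_one by simp
    have "Some u \<in> carrier (principal_factor G)"
      using J_class_one_mult_leftD[OF ua] uv a_carrier by simp
    moreover have "Some v \<in> carrier (principal_factor G)"
      using J_class_one_mult_rightD[of "u \<otimes> a" v] uv a_carrier one_in_J_class_one by simp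
    moreover have "Some u \<otimes>\<^bsub>principal_factor G\<^esub> Some a \<otimes>\<^bsub>principal_factor G\<^esub> Some v = Some \<one>"
      using ua uv one_in_J_class_one by simp
    ultimately have one: "Some \<one> \<in> I"
      using closed[OF _ a] by metis
    have one_carrier: "Some \<one> \<in> carrier (principal_factor G)"
      using one_in_J_class_one by simp
    have "x \<in> I" if "x \<in> carrier (principal_factor G)" for x
    proof -
      have "x \<otimes>\<^bsub>principal_factor G\<^esub> Some \<one> \<otimes>\<^bsub>principal_factor G\<^esub> Some \<one> = x"
        using that one_in_J_class_one by (auto simp: J_class_one_carrier)
      with closed[OF that one one_carrier] show ?thesis
        by simp
    qed
    with I show ?thesis by blast
  qed
qed

end

lemma val_stepI:
  "(A, \<alpha>, n) \<in> rules Gr \<Longrightarrow>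
    ((w1 @ [Inl A] @ w2, m), (w1 @ \<alpha> @ w2, m \<otimes>\<^bsub>M\<^esub> n)) \<in> val_step M Gr"
  unfolding val_step_def by blast

lemma val_stepE:
  assumes "(y, z) \<in> val_step M Gr"
  obtains w1 w2 A \<alpha> m n where "y = (w1 @ [Inl A] @ w2, m)" "z = (w1 @ \<alpha> @ w2, m \<otimes>\<^bsub>M\<^esub> n)"
    "(A, \<alpha>, n) \<in> rules Gr"
  using assms unfolding val_step_def by blast

lemma (in monoid) val_steps_carrier:
  assumes labels: "\<forall>(A, \<alpha>, n) \<in> rules Gr. n \<in> carrier G"
    and "(x, y) \<in> (val_step G Gr)\<^sup>*" "snd x \<in> carrier G"
  shows "snd y \<in> carrier G"
  using assms(2,3)
proof (induction y rule: rtrancl_induct)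
  case (step y z)
  from step.hyps(2) obtain w1 w2 A \<alpha> m n where "y = (w1 @ [Inl A] @ w2, m)"
    and "z = (w1 @ \<alpha> @ w2, m \<otimes> n)" and "(A, \<alpha>, n) \<in> rules Gr"
    by (rule val_stepE)
  with step.IH assms(3) labels show ?case
    by auto
qed

lemma (in monoid) val_steps_to_principal_factor:
  assumes labels: "\<forall>(A, \<alpha>, n) \<in> rules Gr. n \<in> carrier G"
    and rules: "\<And>A \<alpha> n. (A, \<alpha>, n) \<in> rules Gr \<Longrightarrow> n \<in> J_class_one G \<Longrightarrow>
      (A, \<alpha>, Some n) \<in> rules Gr'"
    and "(x, y) \<in> (val_step G Gr)\<^sup>*" "snd x \<in> carrier G" "snd y \<in> J_class_one G"
  shows "((fst x, Some (snd x)), (fst y, Some (snd y))) \<in> (val_step (principal_factor G) Gr')\<^sup>*"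
  using assms(3,5)
proof (induction y rule: rtrancl_induct)
  case base
  then show ?case by simp
next
  case (step y z)
  from step.hyps(2) obtain w1 w2 A \<alpha> m n where y: "y = (w1 @ [Inl A] @ w2, m)"
    and z: "z = (w1 @ \<alpha> @ w2, m \<otimes> n)" and r: "(A, \<alpha>, n) \<in> rules Gr"
    by (rule val_stepE)
  have "m \<in> carrier G"
    using val_steps_carrier[OF labels step.hyps(1) assms(4)] y by simp
  moreover have "n \<in> carrier G"
    using labels r by auto
  moreover have mn: "m \<otimes> n \<in> J_class_one G"
    using step.prems z by simp
  ultimately have m_J: "m \<in> J_class_one G" and n_J: "n \<in> J_class_one G"
    using J_class_one_mult_leftD[OF mn] J_class_one_mult_rightD[OF mn] by auto
  have "((fst x, Some (snd x)), (w1 @ [Inl A] @ w2, Some m)) \<in> (val_step (principal_factor G) Gr')\<^sup>*"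
    using step.IH m_J y by simp
  moreover have "((w1 @ [Inl A] @ w2, Some m), (w1 @ \<alpha> @ w2, Some (m \<otimes> n)))
      \<in> val_step (principal_factor G) Gr'"
    using val_stepI[OF rules[OF r n_J], of w1 w2 "Some m" "principal_factor G"] mn by simp
  ultimately show ?case
    using z by (simp add: rtrancl.rtrancl_into_rtrancl)
qed

lemma val_steps_from_principal_factor:
  assumes rules: "\<And>A \<alpha> n. (A, \<alpha>, Some n) \<in> rules Gr' \<Longrightarrow> (A, \<alpha>, n) \<in> rules Gr"
    and "(x, y) \<in> (val_step (principal_factor G) Gr')\<^sup>*" "snd x = Some m" "snd y = Some p"
  shows "((fst x, m), (fst y, p)) \<in> (val_step G Gr)\<^sup>*"
  using assms(2,4)
proof (induction y arbitrary: p rule: rtrancl_induct)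
  case base
  then show ?case using assms(3) by simp
next
  case (step y z)
  from step.hyps(2) obtain w1 w2 A \<alpha> q x' where y: "y = (w1 @ [Inl A] @ w2, q)"
    and z: "z = (w1 @ \<alpha> @ w2, principal_factor_mult G q x')" and r: "(A, \<alpha>, x') \<in> rules Gr'"
    by (auto elim: val_stepE)
  obtain a b where ab: "q = Some a" "x' = Some b" "p = a \<otimes>\<^bsub>G\<^esub> b"
    using step.prems z by (auto simp: principal_factor_mult_eq_Some_iff)
  have "(A, \<alpha>, b) \<in> rules Gr"
    using rules r ab by simp
  then have "((w1 @ [Inl A] @ w2, a), (w1 @ \<alpha> @ w2, a \<otimes>\<^bsub>G\<^esub> b)) \<in> val_step G Gr"
    by (rule val_stepI)
  with step.IH[of a] show ?case
    using y z ab by simp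
qed

lemma (in monoid) val_lang_principal_factor:
  assumes labels: "\<forall>(A, \<alpha>, n) \<in> rules Gr. n \<in> carrier G"
    and rules: "\<And>A \<alpha> n. (A, \<alpha>, Some n) \<in> rules Gr' \<longleftrightarrow>
      (A, \<alpha>, n) \<in> rules Gr \<and> n \<in> J_class_one G"
    and "terms Gr' = terms Gr" "start Gr' = start Gr"
  shows "val_lang (principal_factor G) Gr' = val_lang G Gr"
proof (intro Set.set_eqI iffI)
  fix w
  assume "w \<in> val_lang (principal_factor G) Gr'"
  then have derivation: "(([Inl (start Gr)], Some \<one>), (map Inr w, Some \<one>))
      \<in> (val_step (principal_factor G) Gr')\<^sup>*" and "set w \<subseteq> terms Gr"
    using assms(3,4) by (simp_all add: val_lang_def)
  moreover have "\<And>A \<alpha> n. (A, \<alpha>, Some n) \<in> rules Gr' \<Longrightarrow> (A, \<alpha>, n) \<in> rules Gr"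
    using rules by blast
  ultimately show "w \<in> val_lang G Gr"
    using val_steps_from_principal_factor[OF _ derivation] by (simp add: val_lang_def)
next
  fix w
  assume "w \<in> val_lang G Gr"
  then have derivation: "(([Inl (start Gr)], \<one>), (map Inr w, \<one>)) \<in> (val_step G Gr)\<^sup>*"
    and "set w \<subseteq> terms Gr'"
    using assms(3) by (simp_all add: val_lang_def)
  moreover have "\<And>A \<alpha> n. (A, \<alpha>, n) \<in> rules Gr \<Longrightarrow> n \<in> J_class_one G \<Longrightarrow>
      (A, \<alpha>, Some n) \<in> rules Gr'"
    using rules by blast
  ultimately show "w \<in> val_lang (principal_factor G) Gr'"
    using val_steps_to_principal_factor[OF labels _ derivation] one_in_J_class_one assms(4)
    by (simp add: val_lang_def)
qed

definition with_rules ::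
    "('n, 't, 'm) val_grammar \<Rightarrow> ('n \<times> ('n + 't) list \<times> 'k) set \<Rightarrow> ('n, 't, 'k) val_grammar" where
  "with_rules Gr R = \<lparr>nonterms = nonterms Gr, terms = terms Gr, rules = R, start = start Gr\<rparr>"

lemma with_rules_simps [simp]:
  "nonterms (with_rules Gr R) = nonterms Gr" "terms (with_rules Gr R) = terms Gr"
  "rules (with_rules Gr R) = R" "start (with_rules Gr R) = start Gr"
  by (simp_all add: with_rules_def)

lemma valid_val_grammar_ruleD:
  assumes "valid_val_grammar M Gr" "(A, \<alpha>, n) \<in> rules Gr"
  shows "A \<in> nonterms Gr \<and> n \<in> carrier M \<and> set \<alpha> \<subseteq> Inl ` nonterms Gr \<union> Inr ` terms Gr"
  using assms unfolding valid_val_grammar_def by fast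

lemma valid_val_grammar_with_rules:
  assumes "valid_val_grammar M Gr" "finite R"
    and "\<And>A \<alpha> k. (A, \<alpha>, k) \<in> R \<Longrightarrow> k \<in> carrier K \<and> (\<exists>n. (A, \<alpha>, n) \<in> rules Gr)"
  shows "valid_val_grammar K (with_rules Gr R)"
proof -
  have "A \<in> nonterms Gr \<and> k \<in> carrier K \<and> set \<alpha> \<subseteq> Inl ` nonterms Gr \<union> Inr ` terms Gr"
    if "(A, \<alpha>, k) \<in> R" for A \<alpha> k
    using assms(3)[OF that] valid_val_grammar_ruleD[OF assms(1)] by blast
  then have "\<forall>(A, \<alpha>, k) \<in> R. A \<in> nonterms Gr \<and> k \<in> carrier K \<and>
      set \<alpha> \<subseteq> Inl ` nonterms Gr \<union> Inr ` terms Gr"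
    by blast
  with assms(1,2) show ?thesis
    unfolding valid_val_grammar_def by simp
qed

lemma valid_val_grammar_labels:
  "valid_val_grammar M Gr \<Longrightarrow> \<forall>(A, \<alpha>, n) \<in> rules Gr. n \<in> carrier M"
  unfolding valid_val_grammar_def by fast

context monoid
begin

lemma val_cf_family_subset_principal_factor:
  "val_cf_family G \<subseteq> val_cf_family (principal_factor G)"
proof
  fix L
  assume "L \<in> val_cf_family G"
  then obtain Gr :: "(nat, nat, 'a) val_grammar"
    where valid: "valid_val_grammar G Gr" and L: "L = val_lang G Gr"
    unfolding val_cf_family_def by blast
  define R where "R = {(A, \<alpha>, Some n) | A \<alpha> n. (A, \<alpha>, n) \<in> rules Gr \<and> n \<in> J_class_one G}"
  have "R \<subseteq> (\<lambda>(A, \<alpha>, n). (A, \<alpha>, Some n)) ` rules Gr"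
  proof
    fix r
    assume "r \<in> R"
    then obtain A \<alpha> n where "r = (A, \<alpha>, Some n)" "(A, \<alpha>, n) \<in> rules Gr"
      unfolding R_def by blast
    then show "r \<in> (\<lambda>(A, \<alpha>, n). (A, \<alpha>, Some n)) ` rules Gr"
      by (simp add: rev_image_eqI)
  qed
  then have "finite R"
    using valid finite_subset unfolding valid_val_grammar_def by blast
  with valid have "valid_val_grammar (principal_factor G) (with_rules Gr R)"
    by (rule valid_val_grammar_with_rules) (auto simp: R_def)
  moreover have "L = val_lang (principal_factor G) (with_rules Gr R)"
    unfolding L
    by (rule val_lang_principal_factor[OF valid_val_grammar_labels[OF valid], symmetric])
      (auto simp: R_def)
  ultimately show "L \<in> val_cf_family (principal_factor G)"
    unfolding val_cf_family_def by blast
qed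

lemma principal_factor_val_cf_family_subset:
  "val_cf_family (principal_factor G) \<subseteq> val_cf_family G"
proof
  fix L
  assume "L \<in> val_cf_family (principal_factor G)"
  then obtain Gr :: "(nat, nat, 'a option) val_grammar"
    where valid: "valid_val_grammar (principal_factor G) Gr" and L: "L = val_lang (principal_factor G) Gr"
    unfolding val_cf_family_def by blast
  define R where "R = {(A, \<alpha>, n) | A \<alpha> n. (A, \<alpha>, Some n) \<in> rules Gr}"
  have labels: "n \<in> J_class_one G" if "(A, \<alpha>, Some n) \<in> rules Gr" for A \<alpha> n
    using valid_val_grammar_labels[OF valid] that by auto
  have "R \<subseteq> (\<lambda>(A, \<alpha>, x). (A, \<alpha>, the x)) ` rules Gr"
  proof
    fix r
    assume "r \<in> R"
    then obtain A \<alpha> n where "r = (A, \<alpha>, n)" "(A, \<alpha>, Some n) \<in> rules Gr"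
      unfolding R_def by blast
    then show "r \<in> (\<lambda>(A, \<alpha>, x). (A, \<alpha>, the x)) ` rules Gr"
      by (simp add: rev_image_eqI)
  qed
  then have "finite R"
    using valid finite_subset unfolding valid_val_grammar_def by blast
  with valid have "valid_val_grammar G (with_rules Gr R)"
    by (rule valid_val_grammar_with_rules) (auto simp: R_def labels J_class_one_carrier)
  moreover have "L = val_lang G (with_rules Gr R)"
    unfolding L by (rule val_lang_principal_factor) (auto simp: R_def labels J_class_one_carrier)
  ultimately show "L \<in> val_cf_family G"
    unfolding val_cf_family_def by blast
qed

end

theorem corollary5:
  fixes M :: "'a monoid"
  assumes "monoid M"
  shows "\<exists>N :: 'a option monoid. monoid N \<and> (simple_sgrp N \<or> zero_simple_sgrp N) \<and>
           val_cf_family M = val_cf_family N"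
proof (intro exI conjI)
  interpret monoid M by fact
  show "monoid (principal_factor M)"
    by (rule monoid_principal_factor)
  show "simple_sgrp (principal_factor M) \<or> zero_simple_sgrp (principal_factor M)"
    using zero_simple_principal_factor by blast
  show "val_cf_family M = val_cf_family (principal_factor M)"
    using val_cf_family_subset_principal_factor principal_factor_val_cf_family_subset by blast
qed

end
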